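(* Consider the federated $\beta$-stochastic sign SGD process described in the context, and suppose the bounded-true-gradient and Gaussian-noise assumptions hold. Choose $B=(1+\epsilon_0)B_0$ with $\epsilon_0>\sigma/B_0$, let $0<c<\frac35$, and $c_0=\max\left\{\sqrt{\frac{8\sigma^2}{n}\log\frac6c},\ \sqrt{\frac{8(B+\beta)^2}{p^2}\log\frac{6}{3-5c}}\right\}$. Fix $t\ge1$ and $i\in[d]$. (i) If the adversary is adaptive, or static with $\tau(t)\le\frac{2}{p^2}\log\frac6c$, and $|\nabla F_i(w(t))|\ge\frac{2(B+\beta)}{pM}\tau(t)+\frac{B+\beta}{2\sqrt{2\pi}}e^{-n/2}+\frac{c_0}{\sqrt M}$, then $\Pr\big[\tilde{\boldsymbol g}_i(t)\ne\mathrm{sign}(\nabla F_i(w(t)))\mid w(t)\big]\le\frac{1-c}{2}$. (ii) If the adversary is static with $\tau(t)>\frac{2}{p^2}\log\frac6c$, and $|\nabla F_i(w(t))|\ge\frac{3(B+\beta)\tau(t)}{M}+\frac{B+\beta}{2\sqrt{2\pi}}e^{-n/2}+\frac{c_0}{\sqrt M}$, then $\Pr\big[\tilde{\boldsymbol g}_i(t)\ne\mathrm{sign}(\nabla F_i(w(t)))\mid w(t)\big]\le\frac{1-c}{2}$. In both cases the bound holds regardless of the messages sent by Byzantine clients.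
   Context: Setting: $M$ clients with local functions $f_m:\mathbb{R}^d\to\mathbb{R}$, $F(w)=\frac1M\sum_m f_m(w)$. Parameters: $\beta>0$, $B>0$, mini-batch size $n\ge1$, participation probability $p\in(0,1]$, step size $\eta>0$. $\mathrm{clip}\{g,B\}=\max\{-B,\min\{B,g\}\}$; $\mathrm{sign}(0)=0$. Process: from $w(0)$, in each iteration $t$ a set $\mathcal{S}(t)$ includes each client independently with probability $p$. An adversary chooses Byzantine clients $\mathcal{B}(t)\subseteq[M]$, $\tau(t)=|\mathcal{B}(t)|$; static means chosen independently of $\mathcal{S}(t)$, adaptive means possibly depending on $\mathcal{S}(t)$. Each $m\in\mathcal{S}(t)\setminus\mathcal{B}(t)$ draws $n$ independent stochastic gradients $\boldsymbol g_m^1(t),\dots,\boldsymbol g_m^n(t)$ at $w(t)$ and sends $\hat{\boldsymbol g}_m(t)\in\{-1,1\}^d$ with independent coordinates equal to $1$ with probability $\frac{B+\beta+\mathrm{clip}\{\frac1n\sum_j\boldsymbol g^j_{mi}(t),B\}}{2B+2\beta}$ and $-1$ otherwise; each $m\in\mathcal{S}(t)\cap\mathcal{B}(t)$ sends an arbitrary vector in $\{-1,1\}^d$. The server sets $\tilde{\boldsymbol g}(t)$ to the coordinate-wise sign of the average of received vectors (empty average $=0$), and $w(t+1)=w(t)-\eta\tilde{\boldsymbol g}(t)$. Bounded true gradient: for each $i$ there is $B_i>0$ with $|\nabla f_{mi}(w)|\le B_i$ for all $m,w$; $B_0=\max_iB_i$. Gaussian noise: a stochastic gradient $\boldsymbol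 g_m(w)$ of client $m$ at $w$ is an independent unbiased estimate of $\nabla f_m(w)$ with $\boldsymbol g_{mi}(w)=\nabla f_{mi}(w)+\xi_{mi}$, $\xi_{mi}\sim\mathcal{N}(0,\sigma_{mi}^2)$; $\sigma^2=\max_{m,i}\sigma_{mi}^2$. *)

theory Defs
  imports "HOL-Probability.Probability"
begin

text \<open>One iteration of federated beta-stochastic sign SGD, restricted to one coordinate i,
  started from a given current iterate (i.e. conditioned on w(t)).\<close>

definition clip :: "real \<Rightarrow> real \<Rightarrow> real" where
  "clip g B = max (- B) (min B g)"

definition gauss :: "real \<Rightarrow> real \<Rightarrow> real measure" where
  "gauss mu s = (if s = 0 then return borel mu else density lborel (normal_density mu s))"

text \<open>Probability that an honest client sends +1, given its averaged mini-batch gradient coordinate.\<close>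
definition honest_prob :: "real \<Rightarrow> real \<Rightarrow> real \<Rightarrow> real" where
  "honest_prob B beta x = (B + beta + clip x B) / (2 * B + 2 * beta)"

text \<open>Law of the coordinate message of an honest client (True = +1, False = -1): it draws n independent
  stochastic gradient coordinates  g^j = mu + xi_j, xi_j ~ N(0, s^2), averages them and randomizes.\<close>
definition msg_law :: "nat \<Rightarrow> real \<Rightarrow> real \<Rightarrow> real \<Rightarrow> real \<Rightarrow> bool measure" where
  "msg_law n B beta mu s =
     Giry_Monad.bind (PiM {..<n} (\<lambda>j. gauss mu s))
       (\<lambda>g. measure_pmf (bernoulli_pmf (honest_prob B beta ((\<Sum>j<n. g j) / real n))))"

text \<open>Law of (participation indicator, honest message) of one client; participation ~ Bernoulli(p),
  independent of the gradient sampling.\<close>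
definition client_law :: "real \<Rightarrow> nat \<Rightarrow> real \<Rightarrow> real \<Rightarrow> real \<Rightarrow> real \<Rightarrow> (bool \<times> bool) measure" where
  "client_law p n B beta mu s = measure_pmf (bernoulli_pmf p) \<Otimes>\<^sub>M msg_law n B beta mu s"

definition round_law :: "nat \<Rightarrow> real \<Rightarrow> nat \<Rightarrow> real \<Rightarrow> real \<Rightarrow> (nat \<Rightarrow> real) \<Rightarrow> (nat \<Rightarrow> real)
    \<Rightarrow> (nat \<Rightarrow> bool \<times> bool) measure" where
  "round_law M p n B beta mu s = PiM {..<M} (\<lambda>m. client_law p n B beta (mu m) (s m))"

definition pm :: "bool \<Rightarrow> real" where
  "pm b = (if b then 1 else -1)"

definition part_set :: "nat \<Rightarrow> (nat \<Rightarrow> bool \<times> bool) \<Rightarrow> nat set" where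
  "part_set M \<omega> = {m. m < M \<and> fst (\<omega> m)}"

text \<open>Server output for the coordinate: sign of the average of received messages (empty average = 0).
  Byz maps the participating set to the Byzantine set; bm gives the (arbitrary) Byzantine messages,
  which may depend on the whole outcome.\<close>
definition server_sign :: "nat \<Rightarrow> (nat set \<Rightarrow> nat set) \<Rightarrow> ((nat \<Rightarrow> bool \<times> bool) \<Rightarrow> nat \<Rightarrow> bool)
    \<Rightarrow> (nat \<Rightarrow> bool \<times> bool) \<Rightarrow> real" where
  "server_sign M Byz bm \<omega> =
     (let S = part_set M \<omega> in
      sgn ((\<Sum>m\<in>S. pm (if m \<in> Byz S then bm \<omega> m else snd (\<omega> m))) / real (card S)))"

definition static_adv :: "(nat set \<Rightarrow> nat set) \<Rightarrow> bool" where
  "static_adv Byz = (\<exists>T. \<forall>S. Byz S = T)"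

end

(*
  Fix the coordinate and let s0 be the sign of the mean gradient.  The mini-batch mean of an
  honest client is Gaussian with standard deviation at most sigma / sqrt n, and B > B0 + sigma, so
  clipping at B shifts its mean only by a Gaussian tail; hence the vote of an honest client
  (its +-1 message if it participates, 0 otherwise) has mean p mu / (B + beta) up to
  p e^(-n/2) / (2 sqrt (2 pi)).  If the server outputs the wrong sign, s0 times the sum of the
  received messages is <= 0.  An adaptive adversary changes this sum by at most 2 per Byzantine
  client; a static one can be charged -1 for each participating member of its fixed set.  In both
  cases the margin hypothesis puts the expected sum of the resulting independent [-1, 1]-valued
  variables p sqrt M c0 / (B + beta) above the threshold, and Hoeffding's inequality bounds the
  probability by exp (-(p c0 / (B + beta))^2 / 2) <= (1 - c) / 2.
*)

theory Submission
  imports Defs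
begin

lemma normal_density_has_real_derivative:
  assumes "0 < k"
  shows "(normal_density mu k has_real_derivative - (x - mu) / k\<^sup>2 * normal_density mu k x) (at x)"
proof -
  have "((\<lambda>x. exp (- (x - mu)\<^sup>2 / (2 * k\<^sup>2))) has_real_derivative
          exp (- (x - mu)\<^sup>2 / (2 * k\<^sup>2)) * (- (x - mu) / k\<^sup>2)) (at x)"
    using assms by (auto intro!: derivative_eq_intros simp: field_simps power2_eq_square)
  then have "(normal_density mu k has_real_derivative
               1 / sqrt (2 * pi * k\<^sup>2) * (exp (- (x - mu)\<^sup>2 / (2 * k\<^sup>2)) * (- (x - mu) / k\<^sup>2))) (at x)"
    unfolding normal_density_def[abs_def] by (intro DERIV_cmult)
  then show ?thesis
    by (simp add: normal_density_def mult_ac)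
qed

lemma excess_le_normal_moment_excess:
  fixes x mu k B :: real
  assumes "0 < k" "k \<le> B - mu" "B \<le> x"
  shows "x - B \<le> ((x - mu)\<^sup>2 - k\<^sup>2) / (2 * (B - mu))"
proof -
  have "(x - mu)\<^sup>2 - (B - mu)\<^sup>2 = (x - B) * (x + B - 2 * mu)"
    by (simp add: power2_eq_square algebra_simps)
  moreover have "(x - B) * (2 * (B - mu)) \<le> (x - B) * (x + B - 2 * mu)"
    using assms by (intro mult_left_mono) auto
  moreover have "k\<^sup>2 \<le> (B - mu)\<^sup>2"
    using assms by (intro power_mono) auto
  ultimately have "(x - B) * (2 * (B - mu)) \<le> (x - mu)\<^sup>2 - k\<^sup>2"
    by linarith
  then show ?thesis
    using assms by (simp add: field_simps)
qed

lemma has_real_derivative_normal_tail_primitive: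
  assumes k: "0 < k"
  shows "((\<lambda>x. - k\<^sup>2 * ((x - mu) * normal_density mu k x)) has_real_derivative
           ((x - mu)\<^sup>2 - k\<^sup>2) * normal_density mu k x) (at x)"
proof -
  from normal_density_has_real_derivative[OF k]
  have "((\<lambda>x. - k\<^sup>2 * ((x - mu) * normal_density mu k x)) has_real_derivative
          - k\<^sup>2 * (1 * normal_density mu k x + (x - mu) * (- (x - mu) / k\<^sup>2 * normal_density mu k x))) (at x)"
    by (intro derivative_eq_intros) auto
  moreover have "- k\<^sup>2 * (1 * normal_density mu k x + (x - mu) * (- (x - mu) / k\<^sup>2 * normal_density mu k x))
                   = ((x - mu)\<^sup>2 - k\<^sup>2) * normal_density mu k x"
    using k by (simp add: field_simps power2_eq_square)
  ultimately show ?thesis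
    by simp
qed

text \<open>Mills-ratio argument: on \<open>[B, \<infinity>)\<close> the excess is dominated by a multiple of the
  derivative of the primitive above.\<close>
lemma normal_excess_nn_integral_le:
  fixes k mu B :: real
  assumes k: "0 < k" and kB: "k \<le> B - mu"
  shows "(\<integral>\<^sup>+x. ennreal (max 0 (x - B) * normal_density mu k x) \<partial>lborel)
           \<le> ennreal (k\<^sup>2 * normal_density mu k B / 2)"
proof -
  define f where "f x = ((x - mu)\<^sup>2 - k\<^sup>2) * normal_density mu k x" for x
  define F where "F x = - k\<^sup>2 * ((x - mu) * normal_density mu k x)" for x
  have Bmu: "0 < B - mu"
    using k kB by linarith
  have F_deriv: "(F has_real_derivative f x) (at x)" for x
    unfolding F_def f_def by (rule has_real_derivative_normal_tail_primitive[OF k])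
  have f_nonneg: "0 \<le> f x" if "B \<le> x" for x
  proof -
    have "k\<^sup>2 \<le> (x - mu)\<^sup>2"
      using k kB that by (intro power_mono) auto
    then show ?thesis
      unfolding f_def by simp
  qed
  have F_lim: "(F \<longlongrightarrow> 0) at_top"
    unfolding F_def normal_density_def using k by real_asymp
  have f_integral: "(\<integral>\<^sup>+x. ennreal (f x) * indicator {B..} x \<partial>lborel) = 0 - F B"
    by (rule nn_integral_FTC_atLeast[OF _ F_deriv f_nonneg F_lim]) (auto simp: f_def)
  have "(\<integral>\<^sup>+x. ennreal (max 0 (x - B) * normal_density mu k x) \<partial>lborel)
          \<le> (\<integral>\<^sup>+x. ennreal (1 / (2 * (B - mu))) * (ennreal (f x) * indicator {B..} x) \<partial>lborel)"
  proof (rule nn_integral_mono)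
    fix x
    show "ennreal (max 0 (x - B) * normal_density mu k x)
            \<le> ennreal (1 / (2 * (B - mu))) * (ennreal (f x) * indicator {B..} x)"
    proof (cases "B \<le> x")
      case True
      then have "(x - B) * normal_density mu k x
                   \<le> ((x - mu)\<^sup>2 - k\<^sup>2) / (2 * (B - mu)) * normal_density mu k x"
        using excess_le_normal_moment_excess[OF k kB] by (intro mult_right_mono) auto
      then show ?thesis
        using True Bmu f_nonneg[OF True]
        by (auto simp: f_def ennreal_mult'[symmetric] intro!: ennreal_leI)
    qed auto
  qed
  also have "\<dots> = ennreal (1 / (2 * (B - mu))) * (\<integral>\<^sup>+x. ennreal (f x) * indicator {B..} x \<partial>lborel)"
    by (rule nn_integral_cmult) (auto simp: f_def)
  also have "\<dots> = ennreal (1 / (2 * (B - mu)) * - F B)"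
    using Bmu by (simp add: f_integral ennreal_mult'[symmetric])
  also have "1 / (2 * (B - mu)) * - F B = k\<^sup>2 * normal_density mu k B / 2"
    using Bmu by (simp add: F_def field_simps)
  finally show ?thesis .
qed

lemma normal_excess_integrable:
  fixes k mu B :: real
  assumes "0 < k" "0 \<le> B"
  shows "integrable lborel (\<lambda>x. max 0 (x - B) * normal_density mu k x)"
proof (rule Bochner_Integration.integrable_bound[OF integrable_normal_moment_nz_1[OF \<open>0 < k\<close>, of mu]])
  show "AE x in lborel. norm (max 0 (x - B) * normal_density mu k x) \<le> norm (normal_density mu k x * x)"
  proof (intro AE_I2)
    fix x
    have "max 0 (x - B) \<le> \<bar>x\<bar>"
      using \<open>0 \<le> B\<close> by auto
    from mult_right_mono[OF this, of "normal_density mu k x"]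
    show "norm (max 0 (x - B) * normal_density mu k x) \<le> norm (normal_density mu k x * x)"
      by (simp add: abs_mult mult.commute)
  qed
qed measurable

lemma normal_excess_integral_le:
  fixes k mu B :: real
  assumes k: "0 < k" and kB: "k \<le> B - mu" and B: "0 \<le> B"
  shows "(\<integral>x. max 0 (x - B) * normal_density mu k x \<partial>lborel) \<le> k\<^sup>2 * normal_density mu k B / 2"
proof -
  have "ennreal (\<integral>x. max 0 (x - B) * normal_density mu k x \<partial>lborel)
          = (\<integral>\<^sup>+x. ennreal (max 0 (x - B) * normal_density mu k x) \<partial>lborel)"
    by (rule nn_integral_eq_integral[symmetric, OF normal_excess_integrable[OF k B]]) auto
  also have "\<dots> \<le> ennreal (k\<^sup>2 * normal_density mu k B / 2)"
    by (rule normal_excess_nn_integral_le[OF k kB])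
  finally show ?thesis
    by (subst (asm) ennreal_le_iff) auto
qed

lemma clip_eq_minus_excess: "0 \<le> B \<Longrightarrow> clip x B = x - max 0 (x - B) + max 0 (- x - B)"
  unfolding clip_def by auto

lemma normal_density_uminus: "normal_density mu k (- x) = normal_density (- mu) k x"
  unfolding normal_density_def by (simp add: power2_eq_square algebra_simps)

lemma normal_density_at_clip_le:
  fixes k m mu B :: real
  assumes k: "0 < k" and kB: "k \<le> B - \<bar>mu\<bar>" and m: "\<bar>m\<bar> = \<bar>mu\<bar>"
  shows "k\<^sup>2 * normal_density m k B / 2 \<le> k * exp (- (B - \<bar>mu\<bar>)\<^sup>2 / (2 * k\<^sup>2)) / (2 * sqrt (2 * pi))"
proof -
  have "(B - \<bar>mu\<bar>)\<^sup>2 \<le> (B - m)\<^sup>2"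
    using kB k m by (intro power_mono) auto
  then have le: "k * exp (- (B - m)\<^sup>2 / (2 * k\<^sup>2)) \<le> k * exp (- (B - \<bar>mu\<bar>)\<^sup>2 / (2 * k\<^sup>2))"
    using k by (intro mult_left_mono exp_mono divide_right_mono) auto
  have "k\<^sup>2 * normal_density m k B / 2 = k * exp (- (B - m)\<^sup>2 / (2 * k\<^sup>2)) / (2 * sqrt (2 * pi))"
    using k by (simp add: normal_density_def real_sqrt_mult field_simps power2_eq_square)
  then show ?thesis
    by (simp only:) (rule divide_right_mono[OF le], simp)
qed

text \<open>The two excesses of \<open>clip\<close> are the Gaussian tails at \<open>B\<close> and, after the reflection
  \<open>x \<mapsto> - x\<close>, at \<open>B\<close> for mean \<open>- mu\<close>; they enter with opposite signs.\<close>
lemma normal_clip_bias_le: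
  fixes k mu B :: real
  assumes k: "0 < k" and kB: "k \<le> B - \<bar>mu\<bar>"
  shows "\<bar>(\<integral>x. normal_density mu k x * clip x B \<partial>lborel) - mu\<bar>
           \<le> k * exp (- (B - \<bar>mu\<bar>)\<^sup>2 / (2 * k\<^sup>2)) / (2 * sqrt (2 * pi))"
proof -
  have B: "0 \<le> B"
    using k kB by linarith
  define upper where "upper m = (\<integral>x. max 0 (x - B) * normal_density m k x \<partial>lborel)" for m
  have reflect: "(\<lambda>x. max 0 (- x - B) * normal_density mu k x)
                   = (\<lambda>x. (\<lambda>y. max 0 (y - B) * normal_density (- mu) k y) (0 + (-1) * x))"
    by (auto simp: normal_density_uminus[symmetric])
  have lower_int: "integrable lborel (\<lambda>x. max 0 (- x - B) * normal_density mu k x)"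
    unfolding reflect by (rule lborel_integrable_real_affine[OF normal_excess_integrable[OF k B]]) simp
  have lower: "(\<integral>x. max 0 (- x - B) * normal_density mu k x \<partial>lborel) = upper (- mu)"
    unfolding reflect upper_def
    using lborel_integral_real_affine[of "-1" "\<lambda>y. max 0 (y - B) * normal_density (- mu) k y" 0] by simp
  have split: "(\<lambda>x. normal_density mu k x * clip x B) = (\<lambda>x. normal_density mu k x * x
                 - max 0 (x - B) * normal_density mu k x + max 0 (- x - B) * normal_density mu k x)"
    using B by (auto simp: clip_eq_minus_excess algebra_simps)
  have "(\<integral>x. normal_density mu k x * clip x B \<partial>lborel) - mu
          = (\<integral>x. max 0 (- x - B) * normal_density mu k x \<partial>lborel) - upper mu"
    unfolding split upper_def
    using integrable_normal_moment_nz_1[OF k] normal_excess_integrable[OF k B] lower_int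
      integral_normal_moment_nz_1[OF k, of mu]
    by simp
  then have bias: "(\<integral>x. normal_density mu k x * clip x B \<partial>lborel) - mu = upper (- mu) - upper mu"
    unfolding lower .
  have upper_nonneg: "0 \<le> upper m" for m
    unfolding upper_def by (intro integral_nonneg_AE) auto
  have upper_le: "upper m \<le> k * exp (- (B - \<bar>mu\<bar>)\<^sup>2 / (2 * k\<^sup>2)) / (2 * sqrt (2 * pi))"
    if "\<bar>m\<bar> = \<bar>mu\<bar>" for m
  proof -
    have "k \<le> B - m"
      using that kB by linarith
    then show ?thesis
      unfolding upper_def
      by (rule order.trans[OF normal_excess_integral_le[OF k _ B] normal_density_at_clip_le[OF k kB that]])
  qed
  show ?thesis
    using upper_nonneg[of mu] upper_nonneg[of "- mu"] upper_le[of mu] upper_le[of "- mu"]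
    unfolding bias abs_le_iff by simp
qed

definition batch_mean :: "nat \<Rightarrow> (nat \<Rightarrow> real) \<Rightarrow> real" where
  "batch_mean n g = (\<Sum>j<n. g j) / real n"

lemma prob_space_gauss: "0 \<le> s \<Longrightarrow> prob_space (gauss mu s)"
  unfolding gauss_def by (auto intro: prob_space_return prob_space_normal_density)

lemma sets_gauss [measurable_cong]: "sets (gauss mu s) = sets borel"
  unfolding gauss_def by auto

lemma space_gauss: "space (gauss mu s) = UNIV"
  unfolding gauss_def by auto

lemma borel_measurable_clip [measurable]: "(\<lambda>x. clip x B) \<in> borel_measurable borel"
  unfolding clip_def by measurable

lemma borel_measurable_batch_mean [measurable]:
  "batch_mean n \<in> borel_measurable (PiM {..<n} (\<lambda>j. gauss mu s))"
  unfolding batch_mean_def by measurable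

lemma indep_vars_PiM_components:
  assumes M: "\<And>i. i \<in> I \<Longrightarrow> prob_space (M i)" and I: "I \<noteq> {}"
  shows "prob_space.indep_vars (PiM I M) M (\<lambda>i \<omega>. \<omega> i) I"
proof -
  interpret P: prob_space "PiM I M"
    by (rule prob_space_PiM[OF M])
  have "distr (PiM I M) (PiM I M) (\<lambda>x. restrict (\<lambda>i. x i) I) = distr (PiM I M) (PiM I M) (\<lambda>x. x)"
    by (rule distr_cong) (auto simp: space_PiM PiE_def extensional_restrict)
  also have "\<dots> = PiM I (\<lambda>i. distr (PiM I M) (M i) (\<lambda>\<omega>. \<omega> i))"
    by (simp, rule PiM_cong) (use distr_PiM_component[of I M] M in auto)
  finally show ?thesis
    by (subst P.indep_vars_iff_distr_eq_PiM'[OF I]) (auto intro!: measurable_component_singleton)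
qed

lemma distributed_batch_mean_gauss:
  assumes n: "n \<ge> 1" and s: "0 < s"
  shows "distributed (PiM {..<n} (\<lambda>j. gauss mu s)) lborel (batch_mean n)
           (normal_density mu (s / sqrt (real n)))"
proof -
  let ?N = "density lborel (normal_density mu s)"
  let ?A = "PiM {..<n} (\<lambda>j. ?N)"
  have A_eq: "PiM {..<n} (\<lambda>j. gauss mu s) = ?A"
    using s by (simp add: gauss_def)
  interpret A: prob_space ?A
    by (intro prob_space_PiM prob_space_normal_density s)
  have ne: "{..<n} \<noteq> {}"
    using n by (simp add: lessThan_empty_iff)
  have "A.indep_vars (\<lambda>j. ?N) (\<lambda>i \<omega>. \<omega> i) {..<n}"
    by (rule indep_vars_PiM_components) (use ne s prob_space_normal_density in auto)
  then have indep: "A.indep_vars (\<lambda>j. borel) (\<lambda>i \<omega>. \<omega> i) {..<n}"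
    using A.indep_vars_compose2[of "\<lambda>j. ?N" _ _ "\<lambda>i x. x" "\<lambda>j. borel"] by simp
  have component: "distributed ?A lborel (\<lambda>\<omega>. \<omega> i) (normal_density mu s)" if "i \<in> {..<n}" for i
  proof -
    have "distr ?A lborel (\<lambda>\<omega>. \<omega> i) = distr ?A ?N (\<lambda>\<omega>. \<omega> i)"
      by (rule distr_cong) auto
    also have "\<dots> = ?N"
      by (rule distr_PiM_component) (use that s prob_space_normal_density in auto)
    finally show ?thesis
      unfolding distributed_def
      using measurable_component_singleton[OF that, of "\<lambda>j. ?N"] by (auto cong: measurable_cong_sets)
  qed
  have "distributed ?A lborel (\<lambda>x. \<Sum>i<n. x i) (normal_density (\<Sum>i<n. mu) (sqrt (\<Sum>i<n. s\<^sup>2)))"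
    by (rule A.sum_indep_normal[OF _ ne indep _ component]) (use s in auto)
  then have "distributed ?A lborel (\<lambda>x. 0 + (1 / real n) * (\<Sum>i<n. x i))
      (normal_density (0 + (1 / real n) * (\<Sum>i<n. mu)) (\<bar>1 / real n\<bar> * sqrt (\<Sum>i<n. s\<^sup>2)))"
    by (rule A.normal_density_affine) (use n s in auto)
  moreover have "\<bar>1 / real n\<bar> * sqrt (\<Sum>i<n. s\<^sup>2) = s / sqrt (real n)"
    using n s by (simp add: real_sqrt_mult field_simps)
  ultimately show ?thesis
    using n A_eq by (simp add: batch_mean_def[abs_def])
qed

text \<open>Averaging shrinks the standard deviation to \<open>s / \<surd>n\<close>, so the clipping threshold lies
  \<open>\<surd>n\<close> standard deviations away from the mean: this is where \<open>e\<^sup>-\<^sup>n\<^sup>/\<^sup>2\<close> comes from.\<close>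
lemma clipped_batch_mean_bias:
  assumes n: "n \<ge> 1" and s: "0 \<le> s" "s < B - \<bar>mu\<bar>"
  shows "\<bar>(\<integral>g. clip (batch_mean n g) B \<partial>PiM {..<n} (\<lambda>j. gauss mu s)) - mu\<bar>
           \<le> s * exp (- real n / 2) / (2 * sqrt (2 * pi))"
proof (cases "s = 0")
  case True
  have "PiM {..<n} (\<lambda>j. gauss mu s) = PiM {..<n} (\<lambda>j. return borel mu)"
    using True by (simp add: gauss_def)
  also have "\<dots> = return (PiM {..<n} (\<lambda>j. borel)) (restrict (\<lambda>j. mu) {..<n})"
    by (rule PiM_return) auto
  finally have "(\<integral>g. clip (batch_mean n g) B \<partial>PiM {..<n} (\<lambda>j. gauss mu s))
                  = clip (batch_mean n (restrict (\<lambda>j. mu) {..<n})) B"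
    by (simp add: integral_return space_PiM batch_mean_def)
  also have "\<dots> = mu"
    using n s by (auto simp: batch_mean_def clip_def)
  finally show ?thesis
    using True by simp
next
  case False
  define k where "k = s / sqrt (real n)"
  have k: "0 < k" "k \<le> s"
    using False s n by (auto simp: k_def divide_le_eq)
  have "(\<integral>g. clip (batch_mean n g) B \<partial>PiM {..<n} (\<lambda>j. gauss mu s))
          = (\<integral>x. normal_density mu k x * clip x B \<partial>lborel)"
    unfolding k_def using False s
    by (intro distributed_integral[symmetric] distributed_batch_mean_gauss n) auto
  moreover have "\<bar>(\<integral>x. normal_density mu k x * clip x B \<partial>lborel) - mu\<bar>
           \<le> k * exp (- (B - \<bar>mu\<bar>)\<^sup>2 / (2 * k\<^sup>2)) / (2 * sqrt (2 * pi))"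
    using k s by (intro normal_clip_bias_le) auto
  moreover have "exp (- (B - \<bar>mu\<bar>)\<^sup>2 / (2 * k\<^sup>2)) \<le> exp (- real n / 2)"
  proof -
    have "s\<^sup>2 \<le> (B - \<bar>mu\<bar>)\<^sup>2"
      using s by (intro power_mono) auto
    then have "real n * k\<^sup>2 \<le> (B - \<bar>mu\<bar>)\<^sup>2"
      using n by (simp add: k_def power_divide)
    then show ?thesis
      using k by (simp add: field_simps)
  qed
  then have "k * exp (- (B - \<bar>mu\<bar>)\<^sup>2 / (2 * k\<^sup>2)) \<le> s * exp (- real n / 2)"
    using k by (intro mult_mono) auto
  ultimately show ?thesis
    by (smt (verit) divide_right_mono pi_ge_zero real_sqrt_ge_zero zero_le_mult_iff)
qed

lemma abs_clip_le: "0 \<le> B \<Longrightarrow> \<bar>clip x B\<bar> \<le> B"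
  unfolding clip_def by auto

lemma honest_prob_bounds:
  assumes "0 < B" "0 < beta"
  shows "0 \<le> honest_prob B beta x" "honest_prob B beta x \<le> 1"
  using abs_clip_le[of B x] assms unfolding honest_prob_def by (auto simp: field_simps abs_le_iff)

lemma borel_measurable_honest_prob [measurable]: "honest_prob B beta \<in> borel_measurable borel"
  unfolding honest_prob_def by measurable

lemma measurable_bernoulli_pmf_subprob_algebra:
  assumes f: "f \<in> borel_measurable N" and f01: "\<And>x. 0 \<le> f x" "\<And>x. f x \<le> 1"
  shows "(\<lambda>x. measure_pmf (bernoulli_pmf (f x))) \<in> measurable N (subprob_algebra (count_space UNIV))"
proof (rule measurable_subprob_algebra)
  fix X :: "bool set"
  have "emeasure (measure_pmf (bernoulli_pmf (f x))) X
          = ennreal (\<Sum>b\<in>X. if b then f x else 1 - f x)" for x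
    unfolding emeasure_measure_pmf_finite[OF finite[of X]]
    using f01[of x] by (auto intro!: sum.cong simp: sum_nonneg)
  then show "(\<lambda>x. emeasure (measure_pmf (bernoulli_pmf (f x))) X) \<in> borel_measurable N"
    using f by simp
qed (auto intro: prob_space_imp_subprob_space measure_pmf.prob_space_axioms)

lemma msg_law_eq_bind_batch_mean:
  "msg_law n B beta mu s = PiM {..<n} (\<lambda>j. gauss mu s) \<bind>
     (\<lambda>g. measure_pmf (bernoulli_pmf (honest_prob B beta (batch_mean n g))))"
  unfolding msg_law_def batch_mean_def by simp

lemma measurable_msg_kernel:
  assumes "0 < B" "0 < beta"
  shows "(\<lambda>g. measure_pmf (bernoulli_pmf (honest_prob B beta (batch_mean n g))))
           \<in> measurable (PiM {..<n} (\<lambda>j. gauss mu s)) (subprob_algebra (count_space UNIV))"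
  using honest_prob_bounds[OF assms] by (intro measurable_bernoulli_pmf_subprob_algebra) auto

lemma prob_space_msg_law:
  assumes "0 < B" "0 < beta" "0 \<le> s"
  shows "prob_space (msg_law n B beta mu s)"
proof -
  interpret A: prob_space "PiM {..<n} (\<lambda>j. gauss mu s)"
    by (intro prob_space_PiM prob_space_gauss assms)
  show ?thesis
    unfolding msg_law_eq_bind_batch_mean
    by (rule A.prob_space_bind[OF _ measurable_msg_kernel[OF assms(1,2)]])
      (auto intro: measure_pmf.prob_space_axioms)
qed

lemma sets_msg_law:
  assumes "0 \<le> s"
  shows "sets (msg_law n B beta mu s) = sets (count_space UNIV)"
proof -
  interpret A: prob_space "PiM {..<n} (\<lambda>j. gauss mu s)"
    by (intro prob_space_PiM prob_space_gauss assms)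
  show ?thesis
    unfolding msg_law_eq_bind_batch_mean by (rule sets_bind) (auto simp: A.not_empty space_gauss)
qed

lemma measure_msg_law_True:
  assumes B: "0 < B" "0 < beta" and s: "0 \<le> s"
  shows "measure (msg_law n B beta mu s) {True}
           = (B + beta + (\<integral>g. clip (batch_mean n g) B \<partial>PiM {..<n} (\<lambda>j. gauss mu s))) / (2 * B + 2 * beta)"
proof -
  let ?A = "PiM {..<n} (\<lambda>j. gauss mu s)"
  interpret A: prob_space ?A
    by (intro prob_space_PiM prob_space_gauss s)
  interpret Q: prob_space "msg_law n B beta mu s"
    by (rule prob_space_msg_law[OF B s])
  have int_clip: "integrable ?A (\<lambda>g. clip (batch_mean n g) B)"
    by (rule A.integrable_const_bound[where B=B]) (use B abs_clip_le in auto)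
  have int_prob: "integrable ?A (\<lambda>g. honest_prob B beta (batch_mean n g))"
    by (rule A.integrable_const_bound[where B=1]) (use honest_prob_bounds[OF B] in \<open>auto intro!: AE_I2\<close>)
  have "emeasure (msg_law n B beta mu s) {True}
          = (\<integral>\<^sup>+g. ennreal (honest_prob B beta (batch_mean n g)) \<partial>?A)"
    unfolding msg_law_eq_bind_batch_mean
    by (subst emeasure_bind[OF A.not_empty measurable_msg_kernel[OF B]])
      (auto simp: emeasure_pmf_single honest_prob_bounds[OF B] intro!: nn_integral_cong)
  also have "\<dots> = ennreal (\<integral>g. honest_prob B beta (batch_mean n g) \<partial>?A)"
    by (rule nn_integral_eq_integral[OF int_prob]) (simp add: honest_prob_bounds[OF B])
  finally have "measure (msg_law n B beta mu s) {True} = (\<integral>g. honest_prob B beta (batch_mean n g) \<partial>?A)"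
    by (simp add: Q.emeasure_eq_measure integral_nonneg_AE honest_prob_bounds[OF B])
  also have "\<dots> = (\<integral>g. (B + beta) / (2 * B + 2 * beta) + clip (batch_mean n g) B / (2 * B + 2 * beta) \<partial>?A)"
    by (simp add: honest_prob_def add_divide_distrib)
  also have "\<dots> = (B + beta + (\<integral>g. clip (batch_mean n g) B \<partial>?A)) / (2 * B + 2 * beta)"
    using int_clip by (simp add: add_divide_distrib A.prob_space)
  finally show ?thesis .
qed

definition vote :: "bool \<times> bool \<Rightarrow> real" where
  "vote x = (if fst x then pm (snd x) else 0)"

lemma abs_vote_le: "\<bar>vote x\<bar> \<le> 1"
  unfolding vote_def pm_def by auto

context
  fixes p B beta mu s :: real and n :: nat
  assumes p: "0 \<le> p" "p \<le> 1" and B: "0 < B" "0 < beta" and s: "0 \<le> s"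
begin

interpretation Q: prob_space "msg_law n B beta mu s"
  by (rule prob_space_msg_law[OF B s])

interpretation pair_prob_space "measure_pmf (bernoulli_pmf p)" "msg_law n B beta mu s"
  by (simp add: pair_prob_space_def pair_sigma_finite_def prob_space_imp_sigma_finite
      measure_pmf.prob_space_axioms Q.prob_space_axioms)

lemma prob_space_client_law: "prob_space (client_law p n B beta mu s)"
  unfolding client_law_def by (rule P.prob_space_axioms)

interpretation C: prob_space "client_law p n B beta mu s"
  by (rule prob_space_client_law)

lemma sets_client_law: "sets (client_law p n B beta mu s) = sets (count_space UNIV)"
proof -
  have "sets (client_law p n B beta mu s) = sets (count_space (UNIV :: bool set) \<Otimes>\<^sub>M count_space UNIV)"
    unfolding client_law_def by (rule sets_pair_measure_cong) (simp_all add: sets_msg_law s)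
  also have "\<dots> = sets (count_space UNIV)"
    by (subst pair_measure_countable) auto
  finally show ?thesis .
qed

lemma measure_client_law_Times:
  "measure (client_law p n B beta mu s) (X \<times> Y)
     = measure (bernoulli_pmf p) X * measure (msg_law n B beta mu s) Y"
proof -
  have "emeasure (client_law p n B beta mu s) (X \<times> Y)
          = emeasure (bernoulli_pmf p) X * emeasure (msg_law n B beta mu s) Y"
    unfolding client_law_def by (rule Q.emeasure_pair_measure_Times) (simp_all add: sets_msg_law s)
  then show ?thesis
    by (simp add: measure_def enn2real_mult)
qed

lemma integral_participation_client_law:
  "(\<integral>x. of_bool (fst x) \<partial>client_law p n B beta mu s) = p"
proof -
  have "(\<integral>x. of_bool (fst x) \<partial>client_law p n B beta mu s)
          = (\<integral>x. indicator ({True} \<times> UNIV) x \<partial>client_law p n B beta mu s)"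
    by (intro Bochner_Integration.integral_cong) (auto simp: indicator_def)
  also have "\<dots> = measure (client_law p n B beta mu s) ({True} \<times> UNIV)"
    using C.emeasure_finite by (simp add: sets_client_law)
  also have "\<dots> = p"
    using p Q.prob_space sets_eq_imp_space_eq[OF sets_msg_law[OF s]]
    by (simp add: measure_client_law_Times measure_pmf_single)
  finally show ?thesis .
qed

lemma integral_vote_client_law:
  "(\<integral>x. vote x \<partial>client_law p n B beta mu s) = p * (2 * measure (msg_law n B beta mu s) {True} - 1)"
proof -
  let ?C = "client_law p n B beta mu s" and ?Q = "msg_law n B beta mu s"
  have "(\<integral>x. vote x \<partial>?C) = (\<integral>x. indicator ({True} \<times> {True}) x - indicator ({True} \<times> {False}) x \<partial>?C)"
    by (intro Bochner_Integration.integral_cong) (auto simp: vote_def pm_def indicator_def)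
  also have "\<dots> = measure ?C ({True} \<times> {True}) - measure ?C ({True} \<times> {False})"
    using C.emeasure_finite
    by (subst Bochner_Integration.integral_diff)
      (auto simp: sets_client_law less_top[symmetric] intro!: integrable_real_indicator)
  also have "\<dots> = p * measure ?Q {True} - p * measure ?Q {False}"
    using p unfolding measure_client_law_Times by (simp add: measure_pmf_single)
  also have "measure ?Q {False} = 1 - measure ?Q {True}"
  proof -
    have "{False} = space ?Q - {True}"
      using sets_eq_imp_space_eq[OF sets_msg_law[OF s]] by auto
    then show ?thesis
      using Q.prob_compl[of "{True}"] sets_msg_law[OF s] by simp
  qed
  finally show ?thesis
    by (simp add: right_diff_distrib)
qed

lemma abs_integral_vote_client_law_le: "\<bar>\<integral>x. vote x \<partial>client_law p n B beta mu s\<bar> \<le> p"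
proof -
  have "\<bar>2 * measure (msg_law n B beta mu s) {True} - 1\<bar> \<le> 1"
    using Q.prob_le_1[of "{True}"] measure_nonneg[of _ "{True}"] by (simp add: abs_le_iff)
  then show ?thesis
    using p by (simp add: integral_vote_client_law abs_mult mult_left_le)
qed

end

text \<open>A participating honest client sends \<open>+1\<close> with mean probability
  \<open>(B + beta + E clip) / (2 B + 2 beta)\<close>, and \<open>s < B + beta\<close> absorbs the noise level in the
  clipping bias.\<close>
lemma client_vote_bias:
  assumes p: "0 \<le> p" "p \<le> 1" and beta: "0 < beta" and n: "n \<ge> 1"
    and s: "0 \<le> s" "s < B - \<bar>mu\<bar>"
  shows "\<bar>(\<integral>x. vote x \<partial>client_law p n B beta mu s) - p * mu / (B + beta)\<bar>
           \<le> p * exp (- real n / 2) / (2 * sqrt (2 * pi))"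
proof -
  let ?EC = "\<integral>g. clip (batch_mean n g) B \<partial>PiM {..<n} (\<lambda>j. gauss mu s)"
  have B: "0 < B" "0 < B + beta"
    using s beta by linarith+
  have "2 * ((B + beta + ?EC) / (2 * B + 2 * beta)) - 1 = ?EC / (B + beta)"
    using B by (simp add: field_simps)
  then have "(\<integral>x. vote x \<partial>client_law p n B beta mu s) - p * mu / (B + beta) = p / (B + beta) * (?EC - mu)"
    by (simp add: integral_vote_client_law[OF p B(1) beta s(1)] measure_msg_law_True[OF B(1) beta s(1)]
        diff_divide_distrib right_diff_distrib)
  then have "\<bar>(\<integral>x. vote x \<partial>client_law p n B beta mu s) - p * mu / (B + beta)\<bar>
               = p / (B + beta) * \<bar>?EC - mu\<bar>"
    using p B by (simp add: abs_mult)
  also have "\<dots> \<le> p / (B + beta) * (s * exp (- real n / 2) / (2 * sqrt (2 * pi)))"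
    using clipped_batch_mean_bias[OF n s] p B by (intro mult_left_mono) auto
  also have "\<dots> = s / (B + beta) * (p * exp (- real n / 2) / (2 * sqrt (2 * pi)))"
    by simp
  also have "\<dots> \<le> p * exp (- real n / 2) / (2 * sqrt (2 * pi))"
    using s beta p by (intro mult_left_le_one_le) auto
  finally show ?thesis .
qed

lemma PiM_sum_lower_deviation_le:
  fixes C :: "nat \<Rightarrow> 'a measure" and phi :: "nat \<Rightarrow> 'a \<Rightarrow> real"
  assumes M: "M \<ge> 1" and C: "\<And>m. m < M \<Longrightarrow> prob_space (C m)"
    and phi: "\<And>m. m < M \<Longrightarrow> phi m \<in> borel_measurable (C m)"
    and phi_bound: "\<And>m x. m < M \<Longrightarrow> \<bar>phi m x\<bar> \<le> 1" and eps: "0 \<le> eps"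
  shows "measure (PiM {..<M} C)
           {\<omega> \<in> space (PiM {..<M} C). (\<Sum>m<M. phi m (\<omega> m)) \<le> (\<Sum>m<M. \<integral>x. phi m x \<partial>C m) - eps}
           \<le> exp (- eps\<^sup>2 / (2 * real M))"
proof -
  have C': "\<And>m. m \<in> {..<M} \<Longrightarrow> prob_space (C m)"
    using C by auto
  interpret P: prob_space "PiM {..<M} C"
    by (rule prob_space_PiM[OF C'])
  have "P.indep_vars C (\<lambda>i \<omega>. \<omega> i) {..<M}"
    using M by (intro indep_vars_PiM_components[OF C']) (auto simp: lessThan_empty_iff)
  then have indep: "P.indep_vars (\<lambda>_. borel) (\<lambda>m \<omega>. phi m (\<omega> m)) {..<M}"
    by (rule P.indep_vars_compose2) (use phi in auto)
  have expectation: "P.expectation (\<lambda>\<omega>. phi m (\<omega> m)) = (\<integral>x. phi m x \<partial>C m)" if "m < M" for m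
  proof -
    have "(\<integral>x. phi m x \<partial>C m) = (\<integral>x. phi m x \<partial>distr (PiM {..<M} C) (C m) (\<lambda>\<omega>. \<omega> m))"
      using distr_PiM_component[of "{..<M}" C m] C' that by simp
    also have "\<dots> = P.expectation (\<lambda>\<omega>. phi m (\<omega> m))"
      by (rule integral_distr) (use that phi in auto)
    finally show ?thesis
      by simp
  qed
  interpret H: Hoeffding_ineq "PiM {..<M} C" "{..<M}" "\<lambda>m \<omega>. phi m (\<omega> m)" "\<lambda>_. -1" "\<lambda>_. 1"
     "\<Sum>m<M. P.expectation (\<lambda>\<omega>. phi m (\<omega> m))"
    by unfold_locales (use indep phi_bound in \<open>auto simp: abs_le_iff\<close>)
  have "P.prob {\<omega> \<in> space (PiM {..<M} C).
          (\<Sum>m<M. phi m (\<omega> m)) \<le> (\<Sum>m<M. P.expectation (\<lambda>\<omega>. phi m (\<omega> m))) - eps}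
        \<le> exp (-2 * eps\<^sup>2 / (\<Sum>m<M. (1 - (-1))\<^sup>2))"
    by (rule H.Hoeffding_ineq_le[OF eps]) (use M in simp)
  then show ?thesis
    by (simp add: expectation)
qed

lemma measure_PiM_le_of_sum_lower_deviation:
  fixes C :: "nat \<Rightarrow> 'a measure" and phi :: "nat \<Rightarrow> 'a \<Rightarrow> real"
  assumes M: "M \<ge> 1" and C: "\<And>m. m < M \<Longrightarrow> prob_space (C m)"
    and phi: "\<And>m. m < M \<Longrightarrow> phi m \<in> borel_measurable (C m)"
    and phi_bound: "\<And>m x. m < M \<Longrightarrow> \<bar>phi m x\<bar> \<le> 1" and eps: "0 \<le> eps"
    and below: "\<And>\<omega>. \<omega> \<in> A \<Longrightarrow> (\<Sum>m<M. phi m (\<omega> m)) \<le> a"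
    and gap: "a + eps \<le> (\<Sum>m<M. \<integral>x. phi m x \<partial>C m)"
    and A: "A \<subseteq> space (PiM {..<M} C)"
  shows "measure (PiM {..<M} C) A \<le> exp (- eps\<^sup>2 / (2 * real M))"
proof -
  interpret P: prob_space "PiM {..<M} C"
    by (rule prob_space_PiM) (use C in auto)
  have [measurable]: "(\<lambda>\<omega>. phi m (\<omega> m)) \<in> borel_measurable (PiM {..<M} C)" if "m \<in> {..<M}" for m
    using measurable_compose[OF measurable_component_singleton[OF that] phi] that by auto
  have "measure (PiM {..<M} C) A \<le> measure (PiM {..<M} C)
          {\<omega> \<in> space (PiM {..<M} C). (\<Sum>m<M. phi m (\<omega> m)) \<le> (\<Sum>m<M. \<integral>x. phi m x \<partial>C m) - eps}"
    using A below gap by (intro P.finite_measure_mono) (fastforce, measurable)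
  also have "\<dots> \<le> exp (- eps\<^sup>2 / (2 * real M))"
    by (rule PiM_sum_lower_deviation_le[OF M C phi phi_bound eps])
  finally show ?thesis .
qed

lemma sum_participants: "(\<Sum>m<M. if fst (\<omega> m) then f m else (0::real)) = (\<Sum>m\<in>part_set M \<omega>. f m)"
  unfolding part_set_def by (simp add: sum.inter_filter[symmetric] lessThan_def)

lemma received_sum_nonpos_if_server_sign_ne:
  fixes s0 :: real
  assumes s0: "s0 = 1 \<or> s0 = -1" and wrong: "server_sign M Byz bm \<omega> \<noteq> s0"
  shows "s0 * (\<Sum>m\<in>part_set M \<omega>. pm (if m \<in> Byz (part_set M \<omega>) then bm \<omega> m else snd (\<omega> m))) \<le> 0"
proof (rule ccontr)
  let ?S = "part_set M \<omega>"
  let ?R = "\<Sum>m\<in>?S. pm (if m \<in> Byz ?S then bm \<omega> m else snd (\<omega> m))"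
  assume "\<not> s0 * ?R \<le> 0"
  then have "?S \<noteq> {}" and "sgn ?R = s0"
    using s0 by (auto simp: sgn_if zero_less_mult_iff)
  moreover have "finite ?S"
    unfolding part_set_def by simp
  ultimately have "server_sign M Byz bm \<omega> = s0"
    unfolding server_sign_def Let_def by (simp add: sgn_divide card_gt_0_iff)
  with wrong show False
    by simp
qed

text \<open>Replacing its own message by an arbitrary one, a participating Byzantine client changes
  the signed sum of received messages by at most 2.\<close>
lemma honest_vote_sum_le_if_server_sign_ne:
  fixes s0 :: real
  assumes s0: "s0 = 1 \<or> s0 = -1" and wrong: "server_sign M Byz bm \<omega> \<noteq> s0"
    and Byz: "\<And>S. Byz S \<subseteq> {..<M}" "\<And>S. card (Byz S) = tau"
  shows "(\<Sum>m<M. s0 * vote (\<omega> m)) \<le> 2 * real tau"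
proof -
  let ?S = "part_set M \<omega>"
  let ?D = "Byz ?S"
  let ?received = "\<lambda>m. pm (if m \<in> ?D then bm \<omega> m else snd (\<omega> m))"
  have "(\<Sum>m<M. s0 * vote (\<omega> m)) = (\<Sum>m\<in>?S. s0 * pm (snd (\<omega> m)))"
    unfolding sum_participants[symmetric] vote_def by (simp add: if_distrib cong: if_cong)
  also have "\<dots> \<le> (\<Sum>m\<in>?S. s0 * ?received m + (if m \<in> ?D then 2 else 0))"
    using s0 by (intro sum_mono) (auto simp: pm_def)
  also have "\<dots> = s0 * (\<Sum>m\<in>?S. ?received m) + 2 * real (card (?S \<inter> ?D))"
    by (simp add: sum.distrib sum_distrib_left sum.If_cases part_set_def)
  also have "card (?S \<inter> ?D) \<le> tau"
    using card_mono[OF finite_subset[OF Byz(1) finite_lessThan], of "?S \<inter> ?D"] Byz(2) by auto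
  finally show ?thesis
    using received_sum_nonpos_if_server_sign_ne[OF s0 wrong] by linarith
qed

text \<open>Against a static adversary the Byzantine clients are known in advance, so their votes
  can be replaced by the worst case \<open>-1\<close> whenever they participate.\<close>
lemma static_vote_sum_le_if_server_sign_ne:
  fixes s0 :: real
  assumes s0: "s0 = 1 \<or> s0 = -1" and wrong: "server_sign M Byz bm \<omega> \<noteq> s0"
    and T: "\<And>S. Byz S = T"
  shows "(\<Sum>m<M. if m \<in> T then - of_bool (fst (\<omega> m)) else s0 * vote (\<omega> m)) \<le> 0"
proof -
  let ?S = "part_set M \<omega>"
  have "(\<Sum>m<M. if m \<in> T then - of_bool (fst (\<omega> m)) else s0 * vote (\<omega> m))
          = (\<Sum>m\<in>?S. if m \<in> T then -1 else s0 * pm (snd (\<omega> m)))"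
    unfolding sum_participants[symmetric] vote_def by (intro sum.cong) auto
  also have "\<dots> \<le> (\<Sum>m\<in>?S. s0 * pm (if m \<in> Byz ?S then bm \<omega> m else snd (\<omega> m)))"
    by (rule sum_mono) (use s0 T in \<open>auto simp: pm_def\<close>)
  also have "\<dots> \<le> 0"
    using received_sum_nonpos_if_server_sign_ne[OF s0 wrong] by (simp add: sum_distrib_left)
  finally show ?thesis .
qed

lemma sgn_mult_ge_of_abs_diff_le:
  fixes x y b t :: real
  shows "\<bar>x - y\<bar> \<le> b \<Longrightarrow> sgn t * y - b \<le> sgn t * x"
  by (simp add: sgn_if abs_le_iff)

text \<open>\<open>noise_margin\<close> is what \<open>B = (1 + eps0) B0\<close> with \<open>eps0 > sigma / B0\<close> provides.\<close>
locale sign_sgd_round =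
  fixes M n :: nat and p B beta :: real and mu s :: "nat \<Rightarrow> real"
  assumes M_pos: "M \<ge> 1" and n_pos: "n \<ge> 1" and p: "0 < p" "p \<le> 1" and beta: "0 < beta"
    and noise_margin: "\<And>m. m < M \<Longrightarrow> 0 \<le> s m \<and> s m < B - \<bar>mu m\<bar>"
begin

abbreviation client :: "nat \<Rightarrow> (bool \<times> bool) measure" where
  "client m \<equiv> client_law p n B beta (mu m) (s m)"

abbreviation mean_gradient :: real where
  "mean_gradient \<equiv> (\<Sum>m<M. mu m) / real M"

lemma B_pos: "0 < B"
  using noise_margin[of 0] M_pos by linarith

lemma prob_space_client: "m < M \<Longrightarrow> prob_space (client m)"
  using noise_margin[of m] p by (intro prob_space_client_law B_pos beta) auto

lemma borel_measurable_client: "m < M \<Longrightarrow> f \<in> borel_measurable (client m)"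
  using noise_margin[of m] p B_pos beta
  by (simp add: measurable_cong_sets[OF sets_client_law refl])

lemma wrong_sign_prob_le:
  fixes phi :: "nat \<Rightarrow> bool \<times> bool \<Rightarrow> real"
  assumes phi_bound: "\<And>m x. m < M \<Longrightarrow> \<bar>phi m x\<bar> \<le> 1" and d: "0 \<le> d"
    and below: "\<And>\<omega>. server_sign M Byz bm \<omega> \<noteq> sgn mean_gradient \<Longrightarrow> (\<Sum>m<M. phi m (\<omega> m)) \<le> a"
    and gap: "a + p * sqrt (real M) * d / (B + beta) \<le> (\<Sum>m<M. \<integral>x. phi m x \<partial>client m)"
  shows "measure (round_law M p n B beta mu s)
           {\<omega> \<in> space (round_law M p n B beta mu s). server_sign M Byz bm \<omega> \<noteq> sgn mean_gradient}
           \<le> exp (- (p * d / (B + beta))\<^sup>2 / 2)"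
proof -
  have eps: "0 \<le> p * sqrt (real M) * d / (B + beta)"
    using p d B_pos beta by simp
  have "measure (round_law M p n B beta mu s)
           {\<omega> \<in> space (round_law M p n B beta mu s). server_sign M Byz bm \<omega> \<noteq> sgn mean_gradient}
           \<le> exp (- (p * sqrt (real M) * d / (B + beta))\<^sup>2 / (2 * real M))"
    unfolding round_law_def
    by (rule measure_PiM_le_of_sum_lower_deviation[OF M_pos prob_space_client borel_measurable_client
          phi_bound eps _ gap]) (use below in auto)
  also have "exp (- (p * sqrt (real M) * d / (B + beta))\<^sup>2 / (2 * real M)) = exp (- (p * d / (B + beta))\<^sup>2 / 2)"
    using M_pos by (simp add: power_mult_distrib power_divide)
  finally show ?thesis .
qed

lemma sum_signed_expected_vote_ge:
  "(\<Sum>m<M. sgn mean_gradient * (\<integral>x. vote x \<partial>client m))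
     \<ge> p / (B + beta) * real M * \<bar>mean_gradient\<bar> - real M * (p * exp (- real n / 2) / (2 * sqrt (2 * pi)))"
proof -
  define g where "g = mean_gradient"
  let ?b = "p * exp (- real n / 2) / (2 * sqrt (2 * pi))"
  have "sgn g * (p * mu m / (B + beta)) - ?b \<le> sgn g * (\<integral>x. vote x \<partial>client m)" if "m < M" for m
    using noise_margin[OF that] p beta n_pos
    by (intro sgn_mult_ge_of_abs_diff_le client_vote_bias) auto
  then have "(\<Sum>m<M. sgn g * (p * mu m / (B + beta)) - ?b) \<le> (\<Sum>m<M. sgn g * (\<integral>x. vote x \<partial>client m))"
    by (intro sum_mono) auto
  moreover have "(\<Sum>m<M. sgn g * (p * mu m / (B + beta)) - ?b)
                   = sgn g * (p / (B + beta)) * (\<Sum>m<M. mu m) - real M * ?b"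
    by (simp add: sum_subtractf sum_distrib_left mult.assoc)
  moreover have "sgn g * (\<Sum>m<M. mu m) = real M * \<bar>g\<bar>"
  proof -
    have "(\<Sum>m<M. mu m) = real M * g"
      using M_pos by (simp add: g_def)
    then show ?thesis
      by (simp add: abs_sgn mult_ac)
  qed
  ultimately show ?thesis
    unfolding g_def[symmetric] by (simp add: mult_ac)
qed

lemma sum_signed_expected_vote_ge_margin:
  assumes margin: "\<bar>mean_gradient\<bar> \<ge> (B + beta) / (p * real M) * Y
                     + (B + beta) / (2 * sqrt (2 * pi)) * exp (- real n / 2) + d / sqrt (real M)"
  shows "(\<Sum>m<M. sgn mean_gradient * (\<integral>x. vote x \<partial>client m)) \<ge> Y + p * sqrt (real M) * d / (B + beta)"
proof -
  have Bb: "0 < B + beta"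
    using B_pos beta by simp
  have "p / (B + beta) * real M * ((B + beta) / (p * real M) * Y) = Y"
    using p Bb M_pos by simp
  moreover have "p / (B + beta) * real M * ((B + beta) / (2 * sqrt (2 * pi)) * exp (- real n / 2))
          = real M * (p * exp (- real n / 2) / (2 * sqrt (2 * pi)))"
    using Bb by simp
  moreover have "p / (B + beta) * real M * (d / sqrt (real M)) = p * sqrt (real M) * d / (B + beta)"
  proof -
    have "real M / sqrt (real M) = sqrt (real M)"
      using M_pos by (simp add: real_div_sqrt)
    then show ?thesis
      by (metis times_divide_eq_left times_divide_eq_right mult.commute mult.left_commute)
  qed
  ultimately have "Y + p * sqrt (real M) * d / (B + beta)
          = p / (B + beta) * real M * ((B + beta) / (p * real M) * Y
              + (B + beta) / (2 * sqrt (2 * pi)) * exp (- real n / 2) + d / sqrt (real M))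
            - real M * (p * exp (- real n / 2) / (2 * sqrt (2 * pi)))"
    by (simp add: distrib_left)
  also have "\<dots> \<le> p / (B + beta) * real M * \<bar>mean_gradient\<bar> - real M * (p * exp (- real n / 2) / (2 * sqrt (2 * pi)))"
    using margin p Bb by (intro diff_right_mono mult_left_mono) auto
  finally show ?thesis
    using sum_signed_expected_vote_ge by linarith
qed

lemma mean_gradient_sgn_if_margin:
  assumes "\<bar>mean_gradient\<bar> \<ge> (B + beta) / (p * real M) * Y + (B + beta) / (2 * sqrt (2 * pi)) * exp (- real n / 2) + d / sqrt (real M)"
    and "0 \<le> Y" "0 \<le> d"
  shows "sgn mean_gradient = 1 \<or> sgn mean_gradient = -1"
proof -
  have "0 < (B + beta) / (2 * sqrt (2 * pi)) * exp (- real n / 2)"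
    using B_pos beta by simp
  then have "mean_gradient \<noteq> 0"
    using assms p B_pos beta by (smt (verit) real_sqrt_ge_zero divide_nonneg_nonneg of_nat_0_le_iff
        mult_nonneg_nonneg)
  then show ?thesis
    by (simp add: sgn_if)
qed

lemma wrong_sign_prob_le_adaptive:
  fixes Byz :: "nat set \<Rightarrow> nat set" and tau :: nat and d :: real
  assumes Byz: "\<And>S. Byz S \<subseteq> {..<M}" "\<And>S. card (Byz S) = tau" and d: "0 \<le> d"
    and margin: "\<bar>mean_gradient\<bar> \<ge> 2 * (B + beta) / (p * real M) * real tau
                   + (B + beta) / (2 * sqrt (2 * pi)) * exp (- real n / 2) + d / sqrt (real M)"
  shows "measure (round_law M p n B beta mu s)
           {\<omega> \<in> space (round_law M p n B beta mu s). server_sign M Byz bm \<omega> \<noteq> sgn mean_gradient}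
           \<le> exp (- (p * d / (B + beta))\<^sup>2 / 2)"
proof -
  have margin': "\<bar>mean_gradient\<bar> \<ge> (B + beta) / (p * real M) * (2 * real tau)
                   + (B + beta) / (2 * sqrt (2 * pi)) * exp (- real n / 2) + d / sqrt (real M)"
    using margin by (simp add: algebra_simps)
  have s0: "sgn mean_gradient = 1 \<or> sgn mean_gradient = -1"
    using d by (intro mean_gradient_sgn_if_margin[OF margin']) simp_all
  show ?thesis
    using honest_vote_sum_le_if_server_sign_ne[OF s0 _ Byz] sum_signed_expected_vote_ge_margin[OF margin'] s0
    by (intro wrong_sign_prob_le[where phi="\<lambda>m x. sgn mean_gradient * vote x" and a="2 * real tau"] d)
      (auto simp: abs_mult abs_vote_le)
qed

lemma sum_expected_static_vote_ge:
  assumes T: "T \<subseteq> {..<M}" "card T = tau"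
  shows "(\<Sum>m<M. sgn mean_gradient * (\<integral>x. vote x \<partial>client m)) - 2 * p * real tau
           \<le> (\<Sum>m<M. \<integral>x. (if m \<in> T then - of_bool (fst x) else sgn mean_gradient * vote x) \<partial>client m)"
proof -
  have "sgn mean_gradient * (\<integral>x. vote x \<partial>client m) - (if m \<in> T then 2 * p else 0)
          \<le> (\<integral>x. (if m \<in> T then - of_bool (fst x) else sgn mean_gradient * vote x) \<partial>client m)"
    if "m < M" for m
  proof (cases "m \<in> T")
    case True
    have "\<bar>\<integral>x. vote x \<partial>client m\<bar> \<le> p" and "(\<integral>x. of_bool (fst x) \<partial>client m) = p"
      using noise_margin[OF that] p B_pos beta
      by (simp_all add: abs_integral_vote_client_law_le integral_participation_client_law)
    then show ?thesis
      using True by (cases "mean_gradient = 0") (auto simp: sgn_if abs_le_iff)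
  qed simp
  then have "(\<Sum>m<M. sgn mean_gradient * (\<integral>x. vote x \<partial>client m) - (if m \<in> T then 2 * p else 0))
          \<le> (\<Sum>m<M. \<integral>x. (if m \<in> T then - of_bool (fst x) else sgn mean_gradient * vote x) \<partial>client m)"
    by (intro sum_mono) simp
  moreover have "(\<Sum>m<M. if m \<in> T then 2 * p else 0) = 2 * p * real tau"
    using T by (simp add: sum.If_cases Int_absorb1)
  ultimately show ?thesis
    by (simp add: sum_subtractf)
qed

lemma wrong_sign_prob_le_static:
  fixes Byz :: "nat set \<Rightarrow> nat set" and T :: "nat set" and tau :: nat and d :: real
  assumes T: "\<And>S. Byz S = T" "T \<subseteq> {..<M}" "card T = tau" and d: "0 \<le> d"
    and margin: "\<bar>mean_gradient\<bar> \<ge> 3 * (B + beta) * real tau / real M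
                   + (B + beta) / (2 * sqrt (2 * pi)) * exp (- real n / 2) + d / sqrt (real M)"
  shows "measure (round_law M p n B beta mu s)
           {\<omega> \<in> space (round_law M p n B beta mu s). server_sign M Byz bm \<omega> \<noteq> sgn mean_gradient}
           \<le> exp (- (p * d / (B + beta))\<^sup>2 / 2)"
proof -
  have "(B + beta) / (p * real M) * (3 * p * real tau) = 3 * (B + beta) * real tau / real M"
    using p by simp
  then have margin': "\<bar>mean_gradient\<bar> \<ge> (B + beta) / (p * real M) * (3 * p * real tau)
                   + (B + beta) / (2 * sqrt (2 * pi)) * exp (- real n / 2) + d / sqrt (real M)"
    using margin by simp
  have s0: "sgn mean_gradient = 1 \<or> sgn mean_gradient = -1"
    using d p by (intro mean_gradient_sgn_if_margin[OF margin']) simp_all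
  have "0 \<le> p * real tau"
    using p by simp
  then have gap: "0 + p * sqrt (real M) * d / (B + beta)
      \<le> (\<Sum>m<M. \<integral>x. (if m \<in> T then - of_bool (fst x) else sgn mean_gradient * vote x) \<partial>client m)"
    using sum_expected_static_vote_ge[OF T(2,3)] sum_signed_expected_vote_ge_margin[OF margin'] by linarith
  show ?thesis
  proof (rule wrong_sign_prob_le[OF _ d _ gap])
    show "\<bar>if m \<in> T then - of_bool (fst x) else sgn mean_gradient * vote x\<bar> \<le> 1" for m x
      using s0 by (auto simp: abs_mult abs_vote_le)
  qed (rule static_vote_sum_le_if_server_sign_ne[OF s0 _ T(1)])
qed

end

text \<open>With \<open>L = ln (6 / (3 - 5 c))\<close> the exponent is at least \<open>4 L\<close>, and
  \<open>e\<^sup>-\<^sup>4\<^sup>L = ((3 - 5 c) / 6)\<^sup>4 \<le> (3 - 5 c) / 6 \<le> (1 - c) / 2\<close>.\<close>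
lemma exp_neg_half_sq_le:
  fixes p b c c0 :: real
  assumes p: "0 < p" and b: "0 < b" and c: "0 < c" "c < 3 / 5"
    and c0: "sqrt (8 * b\<^sup>2 / p\<^sup>2 * ln (6 / (3 - 5 * c))) \<le> c0"
  shows "exp (- (p * c0 / b)\<^sup>2 / 2) \<le> (1 - c) / 2"
proof -
  define L where "L = ln (6 / (3 - 5 * c))"
  define q where "q = (3 - 5 * c) / 6"
  have q: "0 < q" "q < 1" "exp (- L) = q"
    using c by (simp_all add: q_def L_def ln_div exp_diff exp_minus)
  have L: "0 \<le> 8 * b\<^sup>2 / p\<^sup>2 * L"
    using c by (simp add: L_def)
  then have "(sqrt (8 * b\<^sup>2 / p\<^sup>2 * L))\<^sup>2 \<le> c0\<^sup>2"
    using c0 unfolding L_def by (intro power_mono) auto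
  then have "8 * b\<^sup>2 / p\<^sup>2 * L \<le> c0\<^sup>2"
    using L by simp
  then have "8 * L \<le> (p * c0 / b)\<^sup>2"
    using p b by (simp add: field_simps power_mult_distrib power_divide)
  then have "exp (- (p * c0 / b)\<^sup>2 / 2) \<le> exp (- L) ^ 4"
    by (simp flip: exp_of_nat_mult)
  also have "\<dots> \<le> q"
    using q power_decreasing[of 1 4 q] by simp
  also have "q \<le> (1 - c) / 2"
    using c by (simp add: q_def)
  finally show ?thesis .
qed

lemma coordinate_noise_margin:
  fixes G :: "nat \<Rightarrow> real ^ 'd \<Rightarrow> real ^ 'd" and Bb :: "'d \<Rightarrow> real" and sig :: "nat \<Rightarrow> 'd \<Rightarrow> real"
    and B B0 sigma eps0 :: real
  assumes Bb_pos: "\<And>j. Bb j > 0"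
    and bounded: "\<And>m x j. m < M \<Longrightarrow> \<bar>G m x $ j\<bar> \<le> Bb j"
    and B0: "B0 = Max (range Bb)"
    and sig_nn: "\<And>m j. sig m j \<ge> 0"
    and sigma: "sigma = sqrt (Max {(sig m j)\<^sup>2 | m j. m < M})"
    and eps0: "eps0 > sigma / B0" and B: "B = (1 + eps0) * B0"
    and m: "m < M"
  shows "0 \<le> sig m i \<and> sig m i < B - \<bar>G m x $ i\<bar>"
proof -
  have B0_ge: "Bb i \<le> B0"
    unfolding B0 by (intro Max_ge) auto
  have "{(sig m j)\<^sup>2 | m j. m < M} = (\<lambda>(m, j). (sig m j)\<^sup>2) ` ({..<M} \<times> UNIV)"
    by auto
  then have "finite {(sig m j)\<^sup>2 | m j. m < M}"
    by simp
  then have "(sig m i)\<^sup>2 \<le> Max {(sig m j)\<^sup>2 | m j. m < M}"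
    using m by (intro Max_ge) auto
  then have "sig m i \<le> sigma"
    unfolding sigma using sig_nn[of m i] real_sqrt_le_mono by fastforce
  moreover have "sigma < eps0 * B0"
    using eps0 Bb_pos[of i] B0_ge by (simp add: pos_divide_less_eq)
  ultimately show ?thesis
    using sig_nn[of m i] bounded[OF m, of x i] B0_ge unfolding B by (simp add: algebra_simps)
qed

theorem corollary1:
  fixes f :: "nat \<Rightarrow> real ^ 'd \<Rightarrow> real"
    and G :: "nat \<Rightarrow> real ^ 'd \<Rightarrow> real ^ 'd"
    and Bb :: "'d \<Rightarrow> real" and sig :: "nat \<Rightarrow> 'd \<Rightarrow> real"
    and M n :: nat and p beta B B0 sigma eps0 c c0 :: real
    and w :: "real ^ 'd" and i :: 'd
    and Byz :: "nat set \<Rightarrow> nat set" and tau :: nat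
    and bm :: "(nat \<Rightarrow> bool \<times> bool) \<Rightarrow> nat \<Rightarrow> bool"
  assumes M_pos: "M \<ge> 1" and n_pos: "n \<ge> 1"
    and p: "0 < p" "p \<le> 1" and beta: "beta > 0"
    and grad: "\<And>m x. m < M \<Longrightarrow> (f m has_derivative (\<lambda>h. G m x \<bullet> h)) (at x)"
    and Bb_pos: "\<And>j. Bb j > 0"
    and bounded: "\<And>m x j. m < M \<Longrightarrow> \<bar>G m x $ j\<bar> \<le> Bb j"
    and B0: "B0 = Max (range Bb)"
    and sig_nn: "\<And>m j. sig m j \<ge> 0"
    and sigma: "sigma = sqrt (Max {(sig m j)\<^sup>2 | m j. m < M})"
    and eps0: "eps0 > sigma / B0" and B: "B = (1 + eps0) * B0"
    and c: "0 < c" "c < 3 / 5"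
    and c0: "c0 = max (sqrt (8 * sigma\<^sup>2 / real n * ln (6 / c)))
                       (sqrt (8 * (B + beta)\<^sup>2 / p\<^sup>2 * ln (6 / (3 - 5 * c))))"
    and Byz: "\<And>S. Byz S \<subseteq> {..<M}" "\<And>S. card (Byz S) = tau"
  defines "gradF \<equiv> (\<Sum>m<M. G m w $ i) / real M"
    and "P \<equiv> measure (round_law M p n B beta (\<lambda>m. G m w $ i) (\<lambda>m. sig m i))
               {\<omega> \<in> space (round_law M p n B beta (\<lambda>m. G m w $ i) (\<lambda>m. sig m i)).
                  server_sign M Byz bm \<omega> \<noteq> sgn ((\<Sum>m<M. G m w $ i) / real M)}"
  shows "(\<bar>gradF\<bar> \<ge> 2 * (B + beta) / (p * real M) * real tau
                  + (B + beta) / (2 * sqrt (2 * pi)) * exp (- real n / 2) + c0 / sqrt (real M)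
            \<longrightarrow> P \<le> (1 - c) / 2)
       \<and> (static_adv Byz \<and> real tau > 2 / p\<^sup>2 * ln (6 / c)
            \<and> \<bar>gradF\<bar> \<ge> 3 * (B + beta) * real tau / real M
                  + (B + beta) / (2 * sqrt (2 * pi)) * exp (- real n / 2) + c0 / sqrt (real M)
            \<longrightarrow> P \<le> (1 - c) / 2)"
proof -
  \<comment> \<open>Hoeffding alone suffices: \<open>grad\<close>, the lower bound on \<open>tau\<close> in (ii) and the first
    entry of the maximum defining \<open>c0\<close> are not needed.\<close>
  interpret sign_sgd_round M n p B beta "\<lambda>m. G m w $ i" "\<lambda>m. sig m i"
    using M_pos n_pos p beta
      coordinate_noise_margin[where M=M and G=G and sig=sig, OF Bb_pos bounded B0 sig_nn sigma eps0 B]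
    by unfold_locales auto
  have c0_bound: "sqrt (8 * (B + beta)\<^sup>2 / p\<^sup>2 * ln (6 / (3 - 5 * c))) \<le> c0"
    unfolding c0 by simp
  have c0_nonneg: "0 \<le> c0"
    by (rule order.trans[OF real_sqrt_ge_zero c0_bound]) (use c in simp)
  have bound: "exp (- (p * c0 / (B + beta))\<^sup>2 / 2) \<le> (1 - c) / 2"
    using B_pos beta by (intro exp_neg_half_sq_le[OF p(1) _ c c0_bound]) simp
  show ?thesis
  proof (intro conjI impI, goal_cases)
    case 1
    show ?case
      unfolding P_def
      by (rule order.trans[OF wrong_sign_prob_le_adaptive[OF Byz c0_nonneg 1[unfolded gradF_def]] bound])
  next
    case 2
    then obtain T where T: "\<And>S. Byz S = T"
      unfolding static_adv_def by blast
    have T_props: "T \<subseteq> {..<M}" "card T = tau"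
      using Byz unfolding T by auto
    show ?case
      unfolding P_def
      by (rule order.trans[OF wrong_sign_prob_le_static[OF T T_props c0_nonneg] bound])
        (use 2 in \<open>simp add: gradF_def\<close>)
  qed
qed

end
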